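(* Let $W(x)=e^{-x^2}Z(x)$, $x\in\mathbb{R}$, be an $N\times N$ Hermite-type weight matrix such that $W(x)=W(-x)$, and let $U(y)=y^{1/2}e^{-y}Z(\sqrt{y})$, $y\in(0,\infty)$, be the associated Laguerre-type weight with parameter $\alpha=\tfrac12$. Let $D\in\mathcal{D}(W)$, let $E$ be the differential operator defined by $Ex=xD$, i.e. $x\,(F\cdot E)(x)=((xF)\cdot D)(x)$ for all smooth matrix functions $F$, and let $\tilde E$ be the operator in the variable $y=x^2$ determined by $(F\cdot E)(\sqrt y)=(\tilde F\cdot\tilde E)(y)$ where $\tilde F(y)=F(\sqrt y)$. Then $\tilde E\in\mathcal{D}(U)$.
   Context: An $N\times N$ weight matrix on an interval $I$ is integrable, positive definite a.e., with exponential decay at infinity and finite moments; it defines $\langle P,Q\rangle_W=\int_I P(x)W(x)Q(x)^*dx$ and a unique sequence of monic orthogonal matrix polynomials $\{P_n\}_{n\ge0}$. Differential operators $\sum_i \frac{d^i}{dx^i}F_i(x)$ act on the right: $P\cdot\sum_i \frac{d^i}{dx^i}F_i=\sum_i P^{(i)}F_i$, and compositions act successively left to right. $\mathcal{D}(W)$ is the algebra of such operators with matrix polynomial coefficients for which there are constant matrices $\Lambda_n$ with $P_n\cdot D=\Lambda_nP_n$ for all $n\ge0$. Hermite-type weight: weight on $\mathbb{R}$ of the form $e^{-x^2}Z(x)$; Laguerre-type weight: weight on $(0,\infty)$ of the form $y^\alpha e^{-y}Z(y)$, $\alpha>-1$. *)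

theory Defs
  imports "HOL-Analysis.Analysis"
begin

definition mat_adj :: "complex^'n^'n \<Rightarrow> complex^'n^'n" where
  "mat_adj A = (\<chi> i j. cnj (A $ j $ i))"

definition pos_def_mat :: "complex^'n^'n \<Rightarrow> bool" where
  "pos_def_mat A \<longleftrightarrow> mat_adj A = A \<and>
     (\<forall>v::complex^'n. v \<noteq> 0 \<longrightarrow>
        (\<Sum>i\<in>UNIV. \<Sum>j\<in>UNIV. cnj (v $ i) * A $ i $ j * v $ j) \<in> \<real> \<and>
        0 < Re (\<Sum>i\<in>UNIV. \<Sum>j\<in>UNIV. cnj (v $ i) * A $ i $ j * v $ j))"

definition weight_matrix :: "(real \<Rightarrow> complex^'n^'n) \<Rightarrow> real set \<Rightarrow> bool" where
  "weight_matrix W I \<longleftrightarrow> is_interval I \<and>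
     (\<forall>k::nat. set_integrable lborel I (\<lambda>x. (x ^ k) *\<^sub>R W x)) \<and>
     (AE x in lborel. x \<in> I \<longrightarrow> pos_def_mat (W x)) \<and>
     (\<exists>c C R. 0 < c \<and> (\<forall>x\<in>I. R \<le> \<bar>x\<bar> \<longrightarrow> norm (W x) \<le> C * exp (- c * \<bar>x\<bar>)))"

definition mat_poly_le :: "(real \<Rightarrow> complex^'n^'n) \<Rightarrow> nat \<Rightarrow> bool" where
  "mat_poly_le F n \<longleftrightarrow> (\<exists>C. \<forall>x. F x = (\<Sum>i\<le>n. (x ^ i) *\<^sub>R C i))"

definition mat_poly :: "(real \<Rightarrow> complex^'n^'n) \<Rightarrow> bool" where
  "mat_poly F \<longleftrightarrow> (\<exists>n. mat_poly_le F n)"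

definition monic_mat_poly :: "(real \<Rightarrow> complex^'n^'n) \<Rightarrow> nat \<Rightarrow> bool" where
  "monic_mat_poly F n \<longleftrightarrow> (\<exists>C. C n = mat 1 \<and> (\<forall>x. F x = (\<Sum>i\<le>n. (x ^ i) *\<^sub>R C i)))"

definition mip :: "(real \<Rightarrow> complex^'n^'n) \<Rightarrow> real set \<Rightarrow>
    (real \<Rightarrow> complex^'n^'n) \<Rightarrow> (real \<Rightarrow> complex^'n^'n) \<Rightarrow> complex^'n^'n" where
  "mip W I P Q = (LINT x:I|lborel. P x ** W x ** mat_adj (Q x))"

definition monic_OP :: "(real \<Rightarrow> complex^'n^'n) \<Rightarrow> real set \<Rightarrow>
    (nat \<Rightarrow> real \<Rightarrow> complex^'n^'n) \<Rightarrow> bool" where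
  "monic_OP W I P \<longleftrightarrow> (\<forall>n. monic_mat_poly (P n) n) \<and>
     (\<forall>n m. n \<noteq> m \<longrightarrow> mip W I (P n) (P m) = 0)"

definition vderiv_iter :: "nat \<Rightarrow> (real \<Rightarrow> complex^'n^'n) \<Rightarrow> real \<Rightarrow> complex^'n^'n" where
  "vderiv_iter i F = ((\<lambda>f x. vector_derivative f (at x)) ^^ i) F"

definition smooth_mat :: "(real \<Rightarrow> complex^'n^'n) \<Rightarrow> bool" where
  "smooth_mat F \<longleftrightarrow>
     (\<forall>i x. (vderiv_iter i F has_vector_derivative vderiv_iter (Suc i) F x) (at x))"

text \<open>A differential operator sum_{i<=k} d^i/dx^i G_i(x), acting on the right:
  F . D = sum_{i<=k} F^(i) G_i.\<close>
definition dop_apply :: "nat \<Rightarrow> (nat \<Rightarrow> real \<Rightarrow> complex^'n^'n) \<Rightarrow>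
    (real \<Rightarrow> complex^'n^'n) \<Rightarrow> real \<Rightarrow> complex^'n^'n" where
  "dop_apply k G F x = (\<Sum>i\<le>k. vderiv_iter i F x ** G i x)"

definition in_DW :: "(real \<Rightarrow> complex^'n^'n) \<Rightarrow> real set \<Rightarrow> nat \<Rightarrow>
    (nat \<Rightarrow> real \<Rightarrow> complex^'n^'n) \<Rightarrow> bool" where
  "in_DW W I k G \<longleftrightarrow>
     (\<forall>i\<le>k. \<exists>p. mat_poly p \<and> (\<forall>x\<in>I. G i x = p x)) \<and>
     (\<exists>P. monic_OP W I P \<and>
        (\<forall>n. \<exists>\<Lambda>. \<forall>x\<in>I. dop_apply k G (P n) x = \<Lambda> ** P n x))"

end

theory Submission
  imports Defs
begin

(* Since W is even, the uniqueness of the monic orthogonal sequence forces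
   P_n(-x) = (-1)^n P_n(x), so P_(2n+1)(x) = x R_n(x^2) with R_n monic of degree n.
   On (0,oo) one has U(x^2) = x W(x), so the substitution y = x^2 turns
   <R_n, R_m>_U into 2 int_0^oo P_(2n+1) W P_(2m+1)^* dx = <P_(2n+1), P_(2m+1)>_W = 0.
   By the definitions of E and E~, applying E~ to R_n(y) amounts to applying D to
   x R_n(x^2) = P_(2n+1)(x), which gives the eigenvalue equation of R_n.  Finally D maps
   the odd polynomial x^(2j+1) to an odd polynomial x q_j(x^2), so y^j . E~ = q_j is a
   polynomial; as y^j . E~ = sum_i j!/(j-i)! y^(j-i) G~_i(y), the coefficients G~_i are
   polynomials, by induction on i. *)

lemma bounded_bilinear_matrix_matrix_mult:
  "bounded_bilinear ((**) :: complex^'n^'n \<Rightarrow> complex^'n^'n \<Rightarrow> complex^'n^'n)"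
proof -
  have "bilinear ((**) :: complex^'n^'n \<Rightarrow> complex^'n^'n \<Rightarrow> complex^'n^'n)"
    unfolding bilinear_def
    by (auto intro!: linearI simp: matrix_matrix_mult_def vec_eq_iff sum.distrib algebra_simps
        scaleR_sum_right)
  then show ?thesis by (simp add: bilinear_conv_bounded_bilinear)
qed

interpretation matrix_mult: bounded_bilinear "(**) :: complex^'n^'n \<Rightarrow> complex^'n^'n \<Rightarrow> complex^'n^'n"
  by (rule bounded_bilinear_matrix_matrix_mult)

lemma linear_mat_adj: "linear mat_adj"
  by (auto intro!: linearI simp: mat_adj_def vec_eq_iff)

lemmas mat_adj_diff = linear_diff[OF linear_mat_adj]
  and mat_adj_minus = linear_neg[OF linear_mat_adj]
  and mat_adj_scaleR = linear_scale[OF linear_mat_adj]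
  and mat_adj_sum = linear_sum[OF linear_mat_adj]

section \<open>Matrix polynomials\<close>

definition falling_fact :: "nat \<Rightarrow> nat \<Rightarrow> real" where
  "falling_fact p m = (\<Prod>k<m. real p - real k)"

lemma falling_fact_Suc: "falling_fact p (Suc m) = falling_fact p m * real (p - m)"
  by (cases "m \<le> p") (auto simp: falling_fact_def of_nat_diff intro!: prod_zero bexI[of _ p])

lemma falling_fact_eq_0: "p < m \<Longrightarrow> falling_fact p m = 0"
  unfolding falling_fact_def by (intro prod_zero) (auto intro!: bexI[of _ p])

lemma falling_fact_self_pos: "0 < falling_fact p p"
  unfolding falling_fact_def by (intro prod_pos) auto

lemma has_real_derivative_falling_fact_power:
  "((\<lambda>x. falling_fact p m * x ^ (p - m)) has_real_derivative
     falling_fact p (Suc m) * x ^ (p - Suc m)) (at x)"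
  using DERIV_cmult[OF DERIV_pow, of "falling_fact p m" "p - m" x]
  by (simp add: falling_fact_Suc mult.assoc)

lemma has_vector_derivative_monomial_sum:
  "((\<lambda>x. \<Sum>s\<in>S. (falling_fact (e s) m * x ^ (e s - m)) *\<^sub>R (C s :: 'a::real_normed_vector))
     has_vector_derivative (\<Sum>s\<in>S. (falling_fact (e s) (Suc m) * x ^ (e s - Suc m)) *\<^sub>R C s)) (at x)"
  by (intro has_vector_derivative_sum has_vector_derivative_scaleR[OF
        has_real_derivative_falling_fact_power has_vector_derivative_const, simplified])

lemma vderiv_iter_Suc: "vderiv_iter (Suc m) F = (\<lambda>x. vector_derivative (vderiv_iter m F) (at x))"
  by (simp add: vderiv_iter_def)

lemma vderiv_iter_monomial_sum:
  assumes "\<And>x. F x = (\<Sum>s\<in>S. x ^ e s *\<^sub>R C s)"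
  shows "vderiv_iter m F = (\<lambda>x. \<Sum>s\<in>S. (falling_fact (e s) m * x ^ (e s - m)) *\<^sub>R C s)"
proof (induction m)
  case 0
  then show ?case using assms by (simp add: vderiv_iter_def falling_fact_def fun_eq_iff)
next
  case (Suc m)
  show ?case
    unfolding vderiv_iter_Suc Suc
    by (rule ext, rule vector_derivative_at[OF has_vector_derivative_monomial_sum])
qed

lemma smooth_mat_monomial_sum:
  assumes "\<And>x. F x = (\<Sum>s\<in>S. x ^ e s *\<^sub>R C s)"
  shows "smooth_mat F"
  unfolding smooth_mat_def vderiv_iter_monomial_sum[OF assms]
  using has_vector_derivative_monomial_sum by blast

lemma mat_polyE:
  assumes "mat_poly F"
  obtains C n where "F = (\<lambda>x. \<Sum>i\<le>n. x ^ i *\<^sub>R C i)"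
  using assms unfolding mat_poly_def mat_poly_le_def by blast

lemma mat_poly_monomial_sum:
  assumes "finite S" "\<And>x. F x = (\<Sum>s\<in>S. x ^ e s *\<^sub>R C s)"
  shows "mat_poly F"
proof -
  let ?D = "\<lambda>k. \<Sum>s\<in>{s\<in>S. e s = k}. C s"
  have "F x = (\<Sum>k\<le>Max (e ` S). \<Sum>s\<in>{s\<in>S. e s = k}. x ^ e s *\<^sub>R C s)" for x
    using assms by (subst sum.group) (auto simp: Max_ge)
  then have "F x = (\<Sum>k\<le>Max (e ` S). x ^ k *\<^sub>R ?D k)" for x
    by (auto simp: scaleR_sum_right intro!: sum.cong)
  then show ?thesis unfolding mat_poly_def mat_poly_le_def by (intro exI allI)
qed

lemma mat_poly_smooth: "mat_poly F \<Longrightarrow> smooth_mat F"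
  by (erule mat_polyE) (simp add: smooth_mat_monomial_sum)

lemma mat_poly_vderiv_iter: "mat_poly F \<Longrightarrow> mat_poly (vderiv_iter m F)"
proof (erule mat_polyE)
  fix C n assume "F = (\<lambda>x. \<Sum>i\<le>n. x ^ i *\<^sub>R C i)"
  with vderiv_iter_monomial_sum[of F id C "{..n}"] show "mat_poly (vderiv_iter m F)"
    by (intro mat_poly_monomial_sum[of "{..n}" _ "\<lambda>i. i - m" "\<lambda>i. falling_fact i m *\<^sub>R C i"])
      (auto simp: mult.commute)
qed

lemma mat_poly_const: "mat_poly (\<lambda>x. A)"
  by (rule mat_poly_monomial_sum[of "{()}" _ "\<lambda>_. 0" "\<lambda>_. A"]) auto

lemma mat_poly_add:
  assumes "mat_poly F" "mat_poly G"
  shows "mat_poly (\<lambda>x. F x + G x)"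
proof -
  obtain C n where F: "F = (\<lambda>x. \<Sum>i\<le>n. x ^ i *\<^sub>R C i)" using assms(1) by (rule mat_polyE)
  obtain D m where G: "G = (\<lambda>x. \<Sum>i\<le>m. x ^ i *\<^sub>R D i)" using assms(2) by (rule mat_polyE)
  show ?thesis
    by (rule mat_poly_monomial_sum[of "{..n} <+> {..m}" _ "case_sum id id" "case_sum C D"])
      (simp_all add: F G sum.Plus o_def)
qed

lemma mat_poly_scaleR: "mat_poly F \<Longrightarrow> mat_poly (\<lambda>x. c *\<^sub>R F x)"
proof (erule mat_polyE)
  fix C n assume "F = (\<lambda>x. \<Sum>i\<le>n. x ^ i *\<^sub>R C i)"
  then show "mat_poly (\<lambda>x. c *\<^sub>R F x)"
    by (intro mat_poly_monomial_sum[of "{..n}" _ id "\<lambda>i. c *\<^sub>R C i"])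
      (simp_all add: scaleR_sum_right mult.commute)
qed

lemma mat_poly_diff: "mat_poly F \<Longrightarrow> mat_poly G \<Longrightarrow> mat_poly (\<lambda>x. F x - G x)"
  using mat_poly_add[of F "\<lambda>x. (-1) *\<^sub>R G x"] mat_poly_scaleR[of G "-1"] by simp

lemma mat_poly_power_scaleR: "mat_poly F \<Longrightarrow> mat_poly (\<lambda>x. x ^ k *\<^sub>R F x)"
proof (erule mat_polyE)
  fix C n assume "F = (\<lambda>x. \<Sum>i\<le>n. x ^ i *\<^sub>R C i)"
  then show "mat_poly (\<lambda>x. x ^ k *\<^sub>R F x)"
    by (intro mat_poly_monomial_sum[of "{..n}" _ "\<lambda>i. i + k" C])
      (simp_all add: scaleR_sum_right power_add mult.commute)
qed

lemma mat_poly_compose_power: "mat_poly F \<Longrightarrow> mat_poly (\<lambda>x. F (x ^ k))"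
proof (erule mat_polyE)
  fix C n assume "F = (\<lambda>x. \<Sum>i\<le>n. x ^ i *\<^sub>R C i)"
  then show "mat_poly (\<lambda>x. F (x ^ k))"
    by (intro mat_poly_monomial_sum[of "{..n}" _ "\<lambda>i. k * i" C]) (simp_all add: power_mult)
qed

lemma mat_poly_matrix_mult:
  assumes "mat_poly F" "mat_poly G"
  shows "mat_poly (\<lambda>x. F x ** G x)"
proof -
  obtain C n where F: "F = (\<lambda>x. \<Sum>i\<le>n. x ^ i *\<^sub>R C i)" using assms(1) by (rule mat_polyE)
  obtain D m where G: "G = (\<lambda>x. \<Sum>j\<le>m. x ^ j *\<^sub>R D j)" using assms(2) by (rule mat_polyE)
  have "F x ** G x = (\<Sum>i\<le>n. \<Sum>j\<le>m. x ^ (i + j) *\<^sub>R (C i ** D j))" for x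
    unfolding F G matrix_mult.sum_left
    by (simp add: matrix_mult.sum_right matrix_mult.scaleR_left matrix_mult.scaleR_right power_add
        mult.commute)
  then show ?thesis
    by (intro mat_poly_monomial_sum[of "{..n} \<times> {..m}" _ "\<lambda>s. fst s + snd s"
          "\<lambda>s. C (fst s) ** D (snd s)"])
      (simp_all add: sum.cartesian_product case_prod_beta)
qed

lemma mat_poly_sum:
  "finite S \<Longrightarrow> (\<And>i. i \<in> S \<Longrightarrow> mat_poly (F i)) \<Longrightarrow> mat_poly (\<lambda>x. \<Sum>i\<in>S. F i x)"
  by (induction S rule: finite_induct)
    (auto intro: mat_poly_add simp: mat_poly_const[of 0, simplified])

lemma mat_poly_dop_apply:
  "(\<And>i. i \<le> k \<Longrightarrow> mat_poly (G i)) \<Longrightarrow> mat_poly F \<Longrightarrow> mat_poly (dop_apply k G F)"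
  unfolding dop_apply_def[abs_def]
  by (intro mat_poly_sum mat_poly_matrix_mult mat_poly_vderiv_iter) auto

lemma monic_mat_poly_imp_mat_poly: "monic_mat_poly F n \<Longrightarrow> mat_poly F"
  unfolding monic_mat_poly_def mat_poly_def mat_poly_le_def by blast

lemma mat_poly_le_monic_expansion:
  assumes P: "\<And>m. monic_mat_poly (P m) m"
  shows "mat_poly_le Q d \<Longrightarrow> \<exists>A. Q = (\<lambda>x. \<Sum>m\<le>d. A m ** P m x)"
proof (induction d arbitrary: Q)
  case 0
  then obtain C where "\<And>x. Q x = C 0" unfolding mat_poly_le_def by auto
  moreover obtain D where "D 0 = mat 1" "\<And>x. P 0 x = D 0"
    using P[of 0] unfolding monic_mat_poly_def by auto
  ultimately show ?case by (intro exI[of _ "\<lambda>_. C 0"]) auto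
next
  case (Suc d)
  obtain C where C: "\<And>x. Q x = (\<Sum>i\<le>Suc d. x ^ i *\<^sub>R C i)"
    using Suc.prems unfolding mat_poly_le_def by blast
  obtain D where D: "D (Suc d) = mat 1" "\<And>x. P (Suc d) x = (\<Sum>i\<le>Suc d. x ^ i *\<^sub>R D i)"
    using P unfolding monic_mat_poly_def by blast
  have lower: "Q x - C (Suc d) ** P (Suc d) x = (\<Sum>i\<le>d. x ^ i *\<^sub>R (C i - C (Suc d) ** D i))" for x
    using D(1) unfolding C D(2) matrix_mult.sum_right
    by (simp add: matrix_mult.scaleR_right scaleR_diff_right sum_subtractf)
  then have "mat_poly_le (\<lambda>x. Q x - C (Suc d) ** P (Suc d) x) d"
    unfolding mat_poly_le_def by (intro exI[of _ "\<lambda>i. C i - C (Suc d) ** D i"] allI lower)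
  then obtain A where A: "(\<lambda>x. Q x - C (Suc d) ** P (Suc d) x) = (\<lambda>x. \<Sum>m\<le>d. A m ** P m x)"
    using Suc.IH by blast
  have "Q x = (\<Sum>m\<le>Suc d. (A(Suc d := C (Suc d))) m ** P m x)" for x
  proof -
    have "Q x = (\<Sum>m\<le>d. A m ** P m x) + C (Suc d) ** P (Suc d) x"
      using fun_cong[OF A, of x] by (simp add: diff_eq_eq)
    then show ?thesis by (simp add: atLeast0AtMost[symmetric])
  qed
  then show ?case by blast
qed

lemma sum_atMost_double_Suc:
  fixes f :: "nat \<Rightarrow> 'a::comm_monoid_add"
  shows "(\<Sum>i\<le>2 * n + 1. f i) = (\<Sum>l\<le>n. f (2 * l) + f (2 * l + 1))"
  by (induction n) (simp_all add: sum.atMost_Suc add.assoc)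

lemma odd_monomial_sum_eq:
  fixes C :: "nat \<Rightarrow> 'a::real_vector"
  assumes Q: "\<And>x. Q x = (\<Sum>i\<le>2 * n + 1. x ^ i *\<^sub>R C i)"
    and odd: "\<And>x. Q (- x) = - Q x"
  shows "Q x = x *\<^sub>R (\<Sum>l\<le>n. (x ^ 2) ^ l *\<^sub>R C (2 * l + 1))"
proof -
  have "Q x = (1 / 2) *\<^sub>R (Q x - Q (- x))"
    by (simp add: odd flip: scaleR_2)
  also have "\<dots> = (\<Sum>i\<le>2 * n + 1. (1 / 2) *\<^sub>R (x ^ i *\<^sub>R C i - (- x) ^ i *\<^sub>R C i))"
    by (simp only: Q sum_subtractf[symmetric] scaleR_sum_right)
  also have "\<dots> = (\<Sum>l\<le>n. x ^ (2 * l + 1) *\<^sub>R C (2 * l + 1))"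
    unfolding sum_atMost_double_Suc by (intro sum.cong refl) (simp add: power_mult flip: scaleR_2)
  also have "\<dots> = x *\<^sub>R (\<Sum>l\<le>n. (x ^ 2) ^ l *\<^sub>R C (2 * l + 1))"
    by (simp add: scaleR_sum_right power_mult)
  finally show ?thesis .
qed

lemma mat_poly_odd_factor:
  assumes "mat_poly Q" "\<And>x. Q (- x) = - Q x"
  shows "\<exists>R. mat_poly R \<and> (\<forall>x. Q x = x *\<^sub>R R (x ^ 2))"
proof -
  obtain C n where C: "Q = (\<lambda>x. \<Sum>i\<le>n. x ^ i *\<^sub>R C i)" using assms(1) by (rule mat_polyE)
  define C' where "C' i = (if i \<le> n then C i else 0)" for i
  have "Q x = (\<Sum>i\<le>2 * n + 1. x ^ i *\<^sub>R C' i)" for x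
    unfolding C C'_def by (rule sum.mono_neutral_cong_left) auto
  then have "Q x = x *\<^sub>R (\<Sum>l\<le>n. (x ^ 2) ^ l *\<^sub>R C' (2 * l + 1))" for x
    by (rule odd_monomial_sum_eq) (rule assms(2))
  moreover have "mat_poly (\<lambda>y. \<Sum>l\<le>n. y ^ l *\<^sub>R C' (2 * l + 1))"
    by (rule mat_poly_monomial_sum[of "{..n}" _ id]) auto
  ultimately show ?thesis by blast
qed

lemma monic_mat_poly_odd_factor:
  assumes "monic_mat_poly Q (2 * n + 1)" "\<And>x. Q (- x) = - Q x"
  shows "\<exists>R. monic_mat_poly R n \<and> (\<forall>x. Q x = x *\<^sub>R R (x ^ 2))"
proof -
  obtain C where C: "C (2 * n + 1) = mat 1" "\<And>x. Q x = (\<Sum>i\<le>2 * n + 1. x ^ i *\<^sub>R C i)"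
    using assms(1) unfolding monic_mat_poly_def by blast
  have "Q x = x *\<^sub>R (\<Sum>l\<le>n. (x ^ 2) ^ l *\<^sub>R C (2 * l + 1))" for x
    using C(2) assms(2) by (rule odd_monomial_sum_eq)
  moreover have "monic_mat_poly (\<lambda>y. \<Sum>l\<le>n. y ^ l *\<^sub>R C (2 * l + 1)) n"
    unfolding monic_mat_poly_def using C(1) by (intro exI[of _ "\<lambda>l. C (2 * l + 1)"]) simp
  ultimately show ?thesis by blast
qed

section \<open>Differential operators\<close>

lemma smooth_matD:
  "smooth_mat F \<Longrightarrow>
    (vderiv_iter i F has_vector_derivative vector_derivative (vderiv_iter i F) (at x)) (at x)"
  unfolding smooth_mat_def vderiv_iter_Suc by blast

lemma vderiv_iter_add:
  assumes "smooth_mat F" "smooth_mat G"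
  shows "vderiv_iter i (\<lambda>x. F x + G x) = (\<lambda>x. vderiv_iter i F x + vderiv_iter i G x)"
proof (induction i)
  case 0
  show ?case by (simp add: vderiv_iter_def)
next
  case (Suc i)
  show ?case
    unfolding vderiv_iter_Suc Suc
    by (intro ext vector_derivative_at has_vector_derivative_add smooth_matD assms)
qed

lemma vderiv_iter_matrix_mult_left:
  assumes "smooth_mat F"
  shows "vderiv_iter i (\<lambda>x. A ** F x) = (\<lambda>x. A ** vderiv_iter i F x)"
proof (induction i)
  case 0
  show ?case by (simp add: vderiv_iter_def)
next
  case (Suc i)
  show ?case
    unfolding vderiv_iter_Suc Suc
    by (intro ext vector_derivative_at bounded_linear.has_vector_derivative[OF
          matrix_mult.bounded_linear_right] smooth_matD assms)
qed

lemma vderiv_iter_sum: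
  assumes "finite S" "\<And>m. m \<in> S \<Longrightarrow> mat_poly (F m)"
  shows "vderiv_iter i (\<lambda>x. \<Sum>m\<in>S. F m x) = (\<lambda>x. \<Sum>m\<in>S. vderiv_iter i (F m) x)"
  using assms
proof (induction S rule: finite_induct)
  case empty
  show ?case using vderiv_iter_monomial_sum[of "\<lambda>x. 0" _ _ "{}"] by simp
next
  case (insert a S)
  then show ?case
    by (simp add: vderiv_iter_add mat_poly_smooth mat_poly_sum)
qed

lemma dop_apply_matrix_mult_sum:
  assumes "finite S" "\<And>m. m \<in> S \<Longrightarrow> mat_poly (F m)"
  shows "dop_apply k G (\<lambda>x. \<Sum>m\<in>S. A m ** F m x) x = (\<Sum>m\<in>S. A m ** dop_apply k G (F m) x)"
proof -
  have "vderiv_iter i (\<lambda>x. \<Sum>m\<in>S. A m ** F m x) x = (\<Sum>m\<in>S. A m ** vderiv_iter i (F m) x)" for i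
    using assms
    by (simp add: vderiv_iter_sum mat_poly_matrix_mult mat_poly_const vderiv_iter_matrix_mult_left
        mat_poly_smooth)
  then show ?thesis
    unfolding dop_apply_def
    by (simp add: matrix_mult.sum_left matrix_mult.sum_right matrix_mul_assoc
        sum.swap[of _ "{..k}"])
qed

lemma vderiv_iter_cong_open:
  assumes "open S" "\<And>y. y \<in> S \<Longrightarrow> f y = g y" "x \<in> S"
  shows "vderiv_iter m f x = vderiv_iter m g x"
  using assms(3)
proof (induction m arbitrary: x)
  case 0
  then show ?case using assms(2) by (simp add: vderiv_iter_def)
next
  case (Suc m)
  have "eventually (\<lambda>y. y \<in> UNIV \<longrightarrow> vderiv_iter m f y = vderiv_iter m g y) (nhds x)"
    unfolding eventually_nhds using assms(1) Suc by blast
  then show ?case unfolding vderiv_iter_Suc by (intro vector_derivative_cong_eq) auto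
qed

lemma dop_apply_cong_open:
  assumes "open S" "\<And>y. y \<in> S \<Longrightarrow> f y = g y" "x \<in> S"
  shows "dop_apply k G f x = dop_apply k G g x"
  unfolding dop_apply_def using vderiv_iter_cong_open[OF assms] by simp

lemma dop_apply_power:
  fixes G :: "nat \<Rightarrow> real \<Rightarrow> complex^'n^'n"
  shows "dop_apply k G (\<lambda>t. t ^ j *\<^sub>R mat 1) y = (\<Sum>i\<le>k. (falling_fact j i * y ^ (j - i)) *\<^sub>R G i y)"
proof -
  have "vderiv_iter i (\<lambda>t. t ^ j *\<^sub>R (mat 1 :: complex^'n^'n)) =
      (\<lambda>x. (falling_fact j i * x ^ (j - i)) *\<^sub>R mat 1)"
    for i using vderiv_iter_monomial_sum[where S="{()}" and e="\<lambda>_. j" and C="\<lambda>_. mat 1"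
        and F="\<lambda>t. t ^ j *\<^sub>R mat 1"] by simp
  then show ?thesis by (simp add: dop_apply_def matrix_mult.scaleR_left)
qed

lemma dop_apply_coeff_mat_poly:
  fixes G :: "nat \<Rightarrow> real \<Rightarrow> complex^'n^'n"
  assumes powers: "\<And>j. \<exists>q. mat_poly q \<and> (\<forall>y\<in>S. dop_apply k G (\<lambda>t. t ^ j *\<^sub>R mat 1) y = q y)"
    and "i \<le> k"
  shows "\<exists>p. mat_poly p \<and> (\<forall>y\<in>S. G i y = p y)"
  using \<open>i \<le> k\<close>
proof (induction i rule: less_induct)
  case (less j)
  then have "\<forall>i. \<exists>p. i < j \<longrightarrow> mat_poly p \<and> (\<forall>y\<in>S. G i y = p y)"
    by auto
  then obtain p where p_poly: "\<And>i. i < j \<Longrightarrow> mat_poly (p i)"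
    and p_eq: "\<And>i y. i < j \<Longrightarrow> y \<in> S \<Longrightarrow> G i y = p i y"
    by metis
  obtain q where q_poly: "mat_poly q"
    and q_eq: "\<And>y. y \<in> S \<Longrightarrow> dop_apply k G (\<lambda>t. t ^ j *\<^sub>R mat 1) y = q y"
    using powers by blast
  \<comment> \<open>on \<open>t ^ j\<close> the operator is triangular in its coefficients, with diagonal entry \<open>j!\<close>\<close>
  define r where "r y = (1 / falling_fact j j) *\<^sub>R
      (q y - (\<Sum>i<j. y ^ (j - i) *\<^sub>R (falling_fact j i *\<^sub>R p i y)))" for y
  have "mat_poly r"
    unfolding r_def[abs_def] using p_poly q_poly
    by (intro mat_poly_scaleR mat_poly_diff mat_poly_sum mat_poly_power_scaleR) auto
  moreover have "G j y = r y" if "y \<in> S" for y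
  proof -
    let ?t = "\<lambda>i. (falling_fact j i * y ^ (j - i)) *\<^sub>R G i y"
    have "q y = (\<Sum>i\<le>j. ?t i)"
      using q_eq[OF that] less.prems
      by (simp add: dop_apply_power falling_fact_eq_0 sum.mono_neutral_right[of "{..k}" "{..j}"])
    also have "\<dots> = (\<Sum>i<j. y ^ (j - i) *\<^sub>R (falling_fact j i *\<^sub>R p i y)) + falling_fact j j *\<^sub>R G j y"
      using p_eq that by (simp add: lessThan_Suc_atMost[symmetric] mult.commute)
    finally show ?thesis
      using falling_fact_self_pos[of j] by (simp add: r_def)
  qed
  ultimately show ?case by blast
qed

lemma set_integrable_mat_poly_weight:
  fixes V :: "real \<Rightarrow> complex^'n^'n"
  assumes mom: "\<And>k. set_integrable lborel I (\<lambda>x. x ^ k *\<^sub>R V x)"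
    and "mat_poly P" "mat_poly Q"
  shows "set_integrable lborel I (\<lambda>x. P x ** V x ** mat_adj (Q x))"
proof -
  obtain C n where P: "P = (\<lambda>x. \<Sum>i\<le>n. x ^ i *\<^sub>R C i)" using assms(2) by (rule mat_polyE)
  obtain D m where Q: "Q = (\<lambda>x. \<Sum>j\<le>m. x ^ j *\<^sub>R D j)" using assms(3) by (rule mat_polyE)
  have "indicator I x *\<^sub>R (P x ** V x ** mat_adj (Q x)) =
      (\<Sum>i\<le>n. \<Sum>j\<le>m. C i ** (indicator I x *\<^sub>R (x ^ (i + j) *\<^sub>R V x)) ** mat_adj (D j))" for x
    unfolding P Q mat_adj_sum mat_adj_scaleR matrix_mult.sum_left
    by (simp add: matrix_mult.sum_right matrix_mult.sum_left matrix_mult.scaleR_right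
        matrix_mult.scaleR_left power_add scaleR_sum_right mult.commute)
  moreover have "integrable lborel (\<lambda>x. C i ** (indicator I x *\<^sub>R (x ^ k *\<^sub>R V x)) ** D)"
    for i k and D :: "complex^'n^'n"
    using mom[of k] unfolding set_integrable_def
    by (rule integrable_bounded_linear[OF bounded_linear_compose[OF
          matrix_mult.bounded_linear_left matrix_mult.bounded_linear_right]])
  ultimately show ?thesis
    unfolding set_integrable_def by simp
qed

lemma mip_matrix_mult_sum_left:
  fixes V :: "real \<Rightarrow> complex^'n^'n"
  assumes "finite S" "\<And>m. m \<in> S \<Longrightarrow> set_integrable lborel I (\<lambda>x. P m x ** V x ** mat_adj (Q x))"
  shows "mip V I (\<lambda>x. \<Sum>m\<in>S. A m ** P m x) Q = (\<Sum>m\<in>S. A m ** mip V I (P m) Q)"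
proof -
  have "indicator I x *\<^sub>R ((\<Sum>m\<in>S. A m ** P m x) ** V x ** mat_adj (Q x)) =
      (\<Sum>m\<in>S. A m ** (indicator I x *\<^sub>R (P m x ** V x ** mat_adj (Q x))))" for x
    by (simp add: matrix_mult.sum_left scaleR_sum_right matrix_mult.scaleR_right matrix_mul_assoc)
  moreover have "integrable lborel (\<lambda>x. indicator I x *\<^sub>R (P m x ** V x ** mat_adj (Q x)))"
    if "m \<in> S" for m
    using assms(2)[OF that] unfolding set_integrable_def .
  ultimately show ?thesis
    unfolding mip_def set_lebesgue_integral_def
    by (simp add: integral_bounded_linear[OF matrix_mult.bounded_linear_right]
        integrable_bounded_linear[OF matrix_mult.bounded_linear_right])
qed

lemma mip_diff_right:
  fixes V :: "real \<Rightarrow> complex^'n^'n"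
  assumes "set_integrable lborel I (\<lambda>x. P x ** V x ** mat_adj (Q1 x))"
    "set_integrable lborel I (\<lambda>x. P x ** V x ** mat_adj (Q2 x))"
  shows "mip V I P (\<lambda>x. Q1 x - Q2 x) = mip V I P Q1 - mip V I P Q2"
  unfolding mip_def mat_adj_diff matrix_mult.diff_right using set_integral_diff(2)[OF assms] by simp

lemma mip_scaleR:
  "mip V I (\<lambda>x. a *\<^sub>R F x) (\<lambda>x. b *\<^sub>R G x) = (a * b) *\<^sub>R mip V I F G"
  by (simp add: mip_def mat_adj_scaleR matrix_mult.scaleR_left matrix_mult.scaleR_right)

definition quad_form :: "complex^'n^'n \<Rightarrow> complex^'n \<Rightarrow> complex" where
  "quad_form A v = (\<Sum>i\<in>UNIV. \<Sum>j\<in>UNIV. cnj (v $ i) * A $ i $ j * v $ j)"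

lemma pos_def_mat_quad_form_pos: "pos_def_mat A \<Longrightarrow> v \<noteq> 0 \<Longrightarrow> 0 < Re (quad_form A v)"
  unfolding pos_def_mat_def quad_form_def by blast

lemma pos_def_mat_quad_form_nonneg: "pos_def_mat A \<Longrightarrow> 0 \<le> Re (quad_form A v)"
  by (cases "v = 0") (auto simp: quad_form_def dest: pos_def_mat_quad_form_pos[of A v])

lemma bounded_linear_Re_quad_form: "bounded_linear (\<lambda>A. Re (quad_form A v))"
proof -
  have "(r *\<^sub>R A) $ i $ j = complex_of_real r * A $ i $ j" for r and A :: "complex^'n^'n" and i j
    by (simp only: vector_scaleR_component) (simp add: scaleR_conv_of_real)
  then show ?thesis
    unfolding linear_conv_bounded_linear[symmetric]
    by (intro linearI) (simp_all add: quad_form_def sum.distrib algebra_simps sum_distrib_left)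
qed

lemma quad_form_matrix_vector_mult: "quad_form A v = (\<Sum>i\<in>UNIV. cnj (v $ i) * (A *v v) $ i)"
  by (simp add: quad_form_def matrix_vector_mult_def sum_distrib_left mult.assoc)

lemma mat_adj_inner:
  "(\<Sum>i\<in>UNIV. cnj (v $ i) * (Q *v w) $ i) = (\<Sum>j\<in>UNIV. cnj ((mat_adj Q *v v) $ j) * w $ j)"
proof -
  have "(\<Sum>i\<in>UNIV. cnj (v $ i) * (Q *v w) $ i) = (\<Sum>i\<in>UNIV. \<Sum>j\<in>UNIV. cnj (v $ i) * Q $ i $ j * w $ j)"
    by (simp add: matrix_vector_mult_def sum_distrib_left mult.assoc)
  also have "\<dots> = (\<Sum>j\<in>UNIV. \<Sum>i\<in>UNIV. cnj (v $ i) * Q $ i $ j * w $ j)"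
    by (rule sum.swap)
  also have "\<dots> = (\<Sum>j\<in>UNIV. cnj ((mat_adj Q *v v) $ j) * w $ j)"
    by (simp add: matrix_vector_mult_def mat_adj_def sum_distrib_left sum_distrib_right mult_ac)
  finally show ?thesis .
qed

lemma quad_form_sandwich: "quad_form (Q ** V ** mat_adj Q) v = quad_form V (mat_adj Q *v v)"
  unfolding quad_form_matrix_vector_mult matrix_vector_mul_assoc[symmetric] mat_adj_inner ..

lemma infinite_if_AE_lborel: "AE x in lborel. P (x::real) \<Longrightarrow> infinite {x. P x}"
proof
  assume "AE x in lborel. P x" "finite {x. P x}"
  then have "AE x in lborel. P x \<and> x \<notin> {x. P x}"
    by (intro eventually_conj AE_not_in finite_imp_null_set_lborel)
  then show False
    using ae_filter_eq_bot_iff[of "lborel :: real measure"] eventually_False by auto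
qed

lemma mat_poly_eq_0_if_AE:
  assumes "mat_poly Q" "AE x in lborel. Q x = 0"
  shows "Q x = 0"
proof -
  obtain C n where Q: "Q = (\<lambda>x. \<Sum>k\<le>n. x ^ k *\<^sub>R C k)" using assms(1) by (rule mat_polyE)
  have entry: "Q x $ b $ i = (\<Sum>k\<le>n. C k $ b $ i * complex_of_real x ^ k)" for x b i
    unfolding Q by (simp only: sum_component vector_scaleR_component)
      (simp add: scaleR_conv_of_real mult.commute)
  have "C k $ b $ i = 0" if "k \<le> n" for k b i
  proof (rule ccontr)
    assume "C k $ b $ i \<noteq> 0"
    then have "finite {z. (\<Sum>k\<le>n. C k $ b $ i * z ^ k) = 0}"
      by (intro polyfun_finite_roots[THEN iffD2] exI[of _ k]) (simp add: that)
    then have "finite (complex_of_real -` {z. (\<Sum>k\<le>n. C k $ b $ i * z ^ k) = 0})"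
      by (rule finite_vimageI) (simp add: inj_def)
    then have "finite {x. Q x $ b $ i = 0}"
      by (simp add: entry vimage_def)
    moreover have "AE x in lborel. Q x $ b $ i = 0"
      using assms(2) by eventually_elim simp
    ultimately show False using infinite_if_AE_lborel by blast
  qed
  then show ?thesis by (simp add: Q vec_eq_iff)
qed

lemma eq_0_if_mat_adj_mult_axis_eq_0:
  assumes "\<And>b. mat_adj A *v axis b 1 = 0"
  shows "(A::complex^'n^'n) = 0"
proof -
  have "(mat_adj A *v axis b 1) $ i = cnj (A $ b $ i)" for b i
    by (simp add: matrix_vector_mult_def mat_adj_def axis_def if_distrib cong: if_cong)
  then show ?thesis using assms by (simp add: vec_eq_iff)
qed

lemma mip_self_eq_0_imp_eq_0:
  fixes V :: "real \<Rightarrow> complex^'n^'n"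
  assumes pd: "AE x in lborel. pos_def_mat (V x)"
    and mom: "\<And>k. set_integrable lborel UNIV (\<lambda>x. x ^ k *\<^sub>R V x)"
    and Q: "mat_poly Q" and "mip V UNIV Q Q = 0"
  shows "Q x = 0"
proof -
  let ?M = "\<lambda>x. Q x ** V x ** mat_adj (Q x)"
  have M: "integrable lborel ?M" "integral\<^sup>L lborel ?M = 0"
    using set_integrable_mat_poly_weight[OF mom Q Q] assms(4)
    unfolding set_integrable_def mip_def set_lebesgue_integral_def by simp_all
  have "AE x in lborel. mat_adj (Q x) *v v = 0" for v
  proof -
    let ?f = "\<lambda>x. Re (quad_form (?M x) v)"
    have f_eq: "?f x = Re (quad_form (V x) (mat_adj (Q x) *v v))" for x
      by (simp add: quad_form_sandwich)
    have f_int: "integrable lborel ?f"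
      by (rule integrable_bounded_linear[OF bounded_linear_Re_quad_form M(1)])
    have "integral\<^sup>L lborel ?f = 0"
      using integral_bounded_linear[OF bounded_linear_Re_quad_form M(1)] M(2)
      by (simp add: quad_form_def)
    moreover have "AE x in lborel. 0 \<le> ?f x"
      using pd by eventually_elim (simp add: f_eq pos_def_mat_quad_form_nonneg)
    ultimately have "AE x in lborel. ?f x = 0"
      using integral_nonneg_eq_0_iff_AE[OF f_int] by simp
    then show ?thesis
      using pd by eventually_elim (use f_eq pos_def_mat_quad_form_pos in force)
  qed
  then have "AE x in lborel. \<forall>b\<in>UNIV. mat_adj (Q x) *v axis b 1 = 0"
    by (subst eventually_ball_finite_distrib) auto
  then have "AE x in lborel. Q x = 0"
    by eventually_elim (simp add: eq_0_if_mat_adj_mult_axis_eq_0)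
  with Q show ?thesis by (rule mat_poly_eq_0_if_AE)
qed

section \<open>Uniqueness and parity of monic orthogonal sequences\<close>

lemma mip_monic_OP_eq_0_if_degree_less:
  fixes V :: "real \<Rightarrow> complex^'n^'n"
  assumes mom: "\<And>k. set_integrable lborel UNIV (\<lambda>x. x ^ k *\<^sub>R V x)"
    and P: "monic_OP V UNIV P" and Q: "mat_poly_le Q d" and "d < n"
  shows "mip V UNIV Q (P n) = 0"
proof -
  have monic: "\<And>m. monic_mat_poly (P m) m" and orth: "\<And>m. m \<noteq> n \<Longrightarrow> mip V UNIV (P m) (P n) = 0"
    using P unfolding monic_OP_def by auto
  obtain A where A: "Q = (\<lambda>x. \<Sum>m\<le>d. A m ** P m x)"
    using mat_poly_le_monic_expansion[OF monic Q] by blast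
  have "mip V UNIV Q (P n) = (\<Sum>m\<le>d. A m ** mip V UNIV (P m) (P n))"
    unfolding A using monic
    by (intro mip_matrix_mult_sum_left set_integrable_mat_poly_weight[OF mom]
        monic_mat_poly_imp_mat_poly) auto
  also have "\<dots> = 0"
    using \<open>d < n\<close> orth by (intro sum.neutral) auto
  finally show ?thesis .
qed

lemma monic_mat_poly_diff_degree_less:
  assumes "monic_mat_poly P (Suc d)" "monic_mat_poly S (Suc d)"
  shows "mat_poly_le (\<lambda>x. P x - S x) d"
proof -
  obtain C where C: "C (Suc d) = mat 1" "\<And>x. P x = (\<Sum>i\<le>Suc d. x ^ i *\<^sub>R C i)"
    using assms(1) unfolding monic_mat_poly_def by blast
  obtain D where D: "D (Suc d) = mat 1" "\<And>x. S x = (\<Sum>i\<le>Suc d. x ^ i *\<^sub>R D i)"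
    using assms(2) unfolding monic_mat_poly_def by blast
  have "P x - S x = (\<Sum>i\<le>d. x ^ i *\<^sub>R (C i - D i))" for x
    using C D by (simp add: scaleR_diff_right sum_subtractf)
  then show ?thesis unfolding mat_poly_le_def by (intro exI[of _ "\<lambda>i. C i - D i"] allI)
qed

lemma monic_OP_unique:
  fixes V :: "real \<Rightarrow> complex^'n^'n"
  assumes pd: "AE x in lborel. pos_def_mat (V x)"
    and mom: "\<And>k. set_integrable lborel UNIV (\<lambda>x. x ^ k *\<^sub>R V x)"
    and P: "monic_OP V UNIV P" and S: "monic_OP V UNIV S"
  shows "P n x = S n x"
proof (cases n)
  case 0
  have "monic_mat_poly (P 0) 0" "monic_mat_poly (S 0) 0"
    using P S by (simp_all add: monic_OP_def)
  then show ?thesis by (auto simp: monic_mat_poly_def 0)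
next
  case (Suc d)
  define Q where "Q x = P n x - S n x" for x
  have Q: "mat_poly_le Q d"
    unfolding Q_def Suc using P S
    by (intro monic_mat_poly_diff_degree_less) (auto simp: monic_OP_def)
  have poly: "mat_poly Q" "mat_poly (P n)" "mat_poly (S n)"
    using Q P S unfolding monic_OP_def mat_poly_def[of Q]
    by (auto intro: monic_mat_poly_imp_mat_poly)
  have "mip V UNIV Q Q = mip V UNIV Q (P n) - mip V UNIV Q (S n)"
    unfolding Q_def[abs_def]
    by (rule mip_diff_right)
      (use poly in \<open>simp_all add: Q_def[abs_def] set_integrable_mat_poly_weight[OF mom]\<close>)
  also have "\<dots> = 0"
    using mip_monic_OP_eq_0_if_degree_less[OF mom P Q] mip_monic_OP_eq_0_if_degree_less[OF mom S Q]
    by (simp add: Suc)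
  finally have "Q x = 0" by (rule mip_self_eq_0_imp_eq_0[OF pd mom poly(1)])
  then show ?thesis unfolding Q_def by simp
qed

lemma monic_mat_poly_reflect:
  assumes "monic_mat_poly F n"
  shows "monic_mat_poly (\<lambda>x. (-1) ^ n *\<^sub>R F (- x)) n"
proof -
  obtain C where C: "C n = mat 1" "\<And>x. F x = (\<Sum>i\<le>n. x ^ i *\<^sub>R C i)"
    using assms unfolding monic_mat_poly_def by blast
  have "(-1) ^ n *\<^sub>R F (- x) = (\<Sum>i\<le>n. x ^ i *\<^sub>R (((-1) ^ n * (-1) ^ i) *\<^sub>R C i))" for x
    unfolding C(2) scaleR_sum_right by (intro sum.cong refl) (simp add: power_minus[of x] mult_ac)
  moreover have "((-1) ^ n * (-1) ^ n) *\<^sub>R C n = mat 1"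
    by (simp add: C(1) flip: power_add)
  ultimately show ?thesis
    unfolding monic_mat_poly_def by (intro exI[of _ "\<lambda>i. ((-1) ^ n * (-1) ^ i) *\<^sub>R C i"]) simp
qed

lemma mip_reflect:
  fixes V :: "real \<Rightarrow> complex^'n^'n"
  assumes "\<And>x. V (- x) = V x"
  shows "mip V UNIV (\<lambda>x. F (- x)) (\<lambda>x. G (- x)) = mip V UNIV F G"
  using lborel_integral_real_affine[of "-1" "\<lambda>x. F x ** V x ** mat_adj (G x)" 0]
  by (simp add: mip_def set_lebesgue_integral_def assms)

lemma monic_OP_parity:
  fixes V :: "real \<Rightarrow> complex^'n^'n"
  assumes pd: "AE x in lborel. pos_def_mat (V x)"
    and mom: "\<And>k. set_integrable lborel UNIV (\<lambda>x. x ^ k *\<^sub>R V x)"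
    and even: "\<And>x. V (- x) = V x"
    and P: "monic_OP V UNIV P"
  shows "P n (- x) = (-1) ^ n *\<^sub>R P n x"
proof -
  define S where "S n x = (-1) ^ n *\<^sub>R P n (- x)" for n x
  have "monic_mat_poly (S n) n" for n
    unfolding S_def by (rule monic_mat_poly_reflect) (use P in \<open>simp add: monic_OP_def\<close>)
  moreover have "mip V UNIV (S a) (S b) = 0" if "a \<noteq> b" for a b
  proof -
    have "mip V UNIV (S a) (S b) =
        ((-1) ^ a * (-1) ^ b) *\<^sub>R mip V UNIV (\<lambda>x. P a (- x)) (\<lambda>x. P b (- x))"
      unfolding S_def by (rule mip_scaleR)
    also have "\<dots> = ((-1) ^ a * (-1) ^ b) *\<^sub>R mip V UNIV (P a) (P b)"
      by (simp only: mip_reflect[of V, OF even])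
    also have "\<dots> = 0"
      using P that by (simp add: monic_OP_def)
    finally show ?thesis .
  qed
  ultimately have "monic_OP V UNIV S"
    unfolding monic_OP_def by blast
  from monic_OP_unique[OF pd mom P this, of n "- x"] show ?thesis
    by (simp add: S_def)
qed

lemma monic_OP_odd_factor:
  fixes W :: "real \<Rightarrow> complex^'n^'n"
  assumes pd: "AE x in lborel. pos_def_mat (W x)"
    and mom: "\<And>k. set_integrable lborel UNIV (\<lambda>x. x ^ k *\<^sub>R W x)"
    and even: "\<And>x. W (- x) = W x"
    and P: "monic_OP W UNIV P"
  obtains R where "\<And>n. monic_mat_poly (R n) n" "\<And>n x. P (2 * n + 1) x = x *\<^sub>R R n (x ^ 2)"
proof -
  have "\<exists>R. monic_mat_poly R n \<and> (\<forall>x. P (2 * n + 1) x = x *\<^sub>R R (x ^ 2))" for n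
    using P monic_OP_parity[OF pd mom even P, of "2 * n + 1"]
    by (intro monic_mat_poly_odd_factor) (simp_all add: monic_OP_def)
  then show ?thesis using that by metis
qed

section \<open>The substitution \<open>y = x\<^sup>2\<close>\<close>

lemma absolutely_integrable_on_if_set_integrable_lborel:
  fixes f :: "'a::euclidean_space \<Rightarrow> 'b::euclidean_space"
  assumes "set_integrable lborel S f"
  shows "f absolutely_integrable_on S"
  unfolding absolutely_integrable_on_def
  using set_borel_integral_eq_integral(1)[OF assms]
    set_borel_integral_eq_integral(1)[OF set_integrable_norm[OF assms]] by simp

lemma set_integral_power2_substitution:
  fixes f :: "real \<Rightarrow> 'a::euclidean_space"
  assumes f: "set_integrable lborel {0<..} f"
    and g: "set_integrable lborel {0<..} (\<lambda>x. (2 * x) *\<^sub>R f (x ^ 2))"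
  shows "(LINT y:{0<..}|lborel. f y) = (LINT x:{0<..}|lborel. (2 * x) *\<^sub>R f (x ^ 2))"
proof -
  have image: "(\<lambda>x. x ^ 2) ` {0<..} = ({0<..} :: real set)"
    by (auto intro!: image_eqI[of _ _ "sqrt y" for y])
  have inj: "inj_on (\<lambda>x::real. x ^ 2) {0<..}"
    by (auto intro!: inj_onI simp: power2_eq_iff)
  have abs_eq: "integral {0<..} (\<lambda>x. \<bar>2 * x\<bar> *\<^sub>R f (x ^ 2)) =
      integral {0<..} (\<lambda>x. (2 * x) *\<^sub>R f (x ^ 2))"
    by (intro integral_cong) simp
  have "(\<lambda>x. \<bar>2 * x\<bar> *\<^sub>R f (x ^ 2)) absolutely_integrable_on {0<..}"
    using absolutely_integrable_on_if_set_integrable_lborel[OF g]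
    by (rule set_integrable_cong[THEN iffD1, rotated -1]) auto
  moreover have "((\<lambda>x. x ^ 2) has_real_derivative 2 * x) (at x within {0<..})" for x :: real
    by (auto intro!: derivative_eq_intros)
  ultimately have "integral ((\<lambda>x. x ^ 2) ` {0<..}) f = integral {0<..} (\<lambda>x. \<bar>2 * x\<bar> *\<^sub>R f (x ^ 2))"
    using has_absolute_integral_change_of_variables_real[of "{0<..}" "\<lambda>x. x ^ 2" "\<lambda>x. 2 * x" f] inj
    by auto
  then show ?thesis
    by (simp add: image abs_eq set_borel_integral_eq_integral(2)[OF f]
        set_borel_integral_eq_integral(2)[OF g])
qed

lemma integral_even_eq_twice_half_line:
  fixes h :: "real \<Rightarrow> 'a::{banach, second_countable_topology}"
  assumes h: "integrable lborel h" and even: "\<And>x. h (- x) = h x"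
  shows "(LINT x|lborel. h x) = 2 *\<^sub>R (LINT x:{0<..}|lborel. h x)"
proof -
  have pos: "integrable lborel (\<lambda>x. indicator {0<..} x *\<^sub>R h x)"
    and neg: "integrable lborel (\<lambda>x. indicator {..<0} x *\<^sub>R h x)"
    by (auto intro: integrable_mult_indicator h)
  have "AE x in lborel. h x = indicator {0<..} x *\<^sub>R h x + indicator {..<0} x *\<^sub>R h x"
    using AE_lborel_singleton[of 0] by eventually_elim (auto split: split_indicator)
  then have "(LINT x|lborel. h x) =
      (LINT x|lborel. indicator {0<..} x *\<^sub>R h x + indicator {..<0} x *\<^sub>R h x)"
    using h pos neg by (intro integral_cong_AE) auto
  also have "\<dots> =
      (LINT x|lborel. indicator {0<..} x *\<^sub>R h x) + (LINT x|lborel. indicator {..<0} x *\<^sub>R h x)"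
    using pos neg by (rule Bochner_Integration.integral_add)
  also have "(LINT x|lborel. indicator {..<0} x *\<^sub>R h x) =
      (LINT x|lborel. indicator {0<..} x *\<^sub>R h x)"
    using lborel_integral_real_affine[of "-1" "\<lambda>x. indicator {..<0} x *\<^sub>R h x" 0]
    by (simp add: even indicator_def)
  finally show ?thesis
    by (simp add: set_lebesgue_integral_def scaleR_2)
qed

lemma mip_half_line_eq_mip_power2:
  fixes U W :: "real \<Rightarrow> complex^'n^'n"
  assumes UW: "\<And>x. 0 < x \<Longrightarrow> U (x ^ 2) = x *\<^sub>R W x"
    and even: "\<And>x. W (- x) = W x"
    and U_int: "set_integrable lborel {0<..} (\<lambda>y. F y ** U y ** mat_adj (G y))"
    and W_int: "integrable lborel (\<lambda>x. (x *\<^sub>R F (x ^ 2)) ** W x ** mat_adj (x *\<^sub>R G (x ^ 2)))"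
  shows "mip U {0<..} F G = mip W UNIV (\<lambda>x. x *\<^sub>R F (x ^ 2)) (\<lambda>x. x *\<^sub>R G (x ^ 2))"
proof -
  define h where "h x = (x *\<^sub>R F (x ^ 2)) ** W x ** mat_adj (x *\<^sub>R G (x ^ 2))" for x
  have h_int: "integrable lborel h"
    using W_int unfolding h_def[abs_def] .
  have h_even: "h (- x) = h x" for x
    by (simp add: h_def even mat_adj_minus matrix_mult.minus_left matrix_mult.minus_right)
  have subst_eq: "(2 * x) *\<^sub>R (F (x ^ 2) ** U (x ^ 2) ** mat_adj (G (x ^ 2))) = 2 *\<^sub>R h x"
    if "x \<in> {0<..}" for x
    using that
    by (simp add: h_def UW mat_adj_scaleR matrix_mult.scaleR_left matrix_mult.scaleR_right mult_ac)
  have "set_integrable lborel {0<..} (\<lambda>x. 2 *\<^sub>R h x)"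
    unfolding set_integrable_def using h_int by (intro integrable_mult_indicator) auto
  then have subst_int: "set_integrable lborel {0<..}
      (\<lambda>x. (2 * x) *\<^sub>R (F (x ^ 2) ** U (x ^ 2) ** mat_adj (G (x ^ 2))))"
    by (rule set_integrable_cong[THEN iffD1, rotated -1]) (auto simp: subst_eq)
  have "mip U {0<..} F G =
      (LINT x:{0<..}|lborel. (2 * x) *\<^sub>R (F (x ^ 2) ** U (x ^ 2) ** mat_adj (G (x ^ 2))))"
    unfolding mip_def by (rule set_integral_power2_substitution[OF U_int subst_int])
  also have "\<dots> = (LINT x:{0<..}|lborel. 2 *\<^sub>R h x)"
    by (rule set_lebesgue_integral_cong) (auto simp: subst_eq)
  also have "\<dots> = (LINT x|lborel. h x)"
    using integral_even_eq_twice_half_line[OF h_int h_even] by simp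
  also have "\<dots> = mip W UNIV (\<lambda>x. x *\<^sub>R F (x ^ 2)) (\<lambda>x. x *\<^sub>R G (x ^ 2))"
    by (simp add: mip_def h_def set_lebesgue_integral_def)
  finally show ?thesis .
qed

lemma monic_OP_half_line:
  fixes U W :: "real \<Rightarrow> complex^'n^'n"
  assumes UW: "\<And>x. 0 < x \<Longrightarrow> U (x ^ 2) = x *\<^sub>R W x"
    and even: "\<And>x. W (- x) = W x"
    and mom_W: "\<And>k. set_integrable lborel UNIV (\<lambda>x. x ^ k *\<^sub>R W x)"
    and mom_U: "\<And>k. set_integrable lborel {0<..} (\<lambda>x. x ^ k *\<^sub>R U x)"
    and P: "monic_OP W UNIV P"
    and R_monic: "\<And>n. monic_mat_poly (R n) n"
    and R: "\<And>n x. P (2 * n + 1) x = x *\<^sub>R R n (x ^ 2)"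
  shows "monic_OP U {0<..} R"
  unfolding monic_OP_def
proof (intro conjI allI impI R_monic)
  fix n m :: nat
  assume "n \<noteq> m"
  have R_poly: "mat_poly (R n)" for n
    by (rule monic_mat_poly_imp_mat_poly[OF R_monic])
  have P_poly: "mat_poly (P n)" for n
    using P unfolding monic_OP_def by (blast intro: monic_mat_poly_imp_mat_poly)
  have "integrable lborel (\<lambda>x. (x *\<^sub>R R n (x ^ 2)) ** W x ** mat_adj (x *\<^sub>R R m (x ^ 2)))"
    using set_integrable_mat_poly_weight[OF mom_W P_poly P_poly, of "2 * n + 1" "2 * m + 1"]
    unfolding set_integrable_def R by simp
  then have "mip U {0<..} (R n) (R m) = mip W UNIV (\<lambda>x. x *\<^sub>R R n (x ^ 2)) (\<lambda>x. x *\<^sub>R R m (x ^ 2))"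
    by (intro mip_half_line_eq_mip_power2 UW even
        set_integrable_mat_poly_weight[OF mom_U R_poly R_poly])
  also have "\<dots> = mip W UNIV (P (2 * n + 1)) (P (2 * m + 1))"
    by (intro arg_cong2[where f="mip W UNIV"] ext) (simp_all only: R)
  also have "\<dots> = 0"
    using P \<open>n \<noteq> m\<close> by (simp add: monic_OP_def)
  finally show "mip U {0<..} (R n) (R m) = 0" .
qed

lemma in_DW_UNIV_D:
  assumes "in_DW W UNIV k G"
  shows "\<exists>P L. monic_OP W UNIV P \<and> (\<forall>n x. dop_apply k G (P n) x = L n ** P n x) \<and>
    (\<forall>i\<le>k. mat_poly (G i))"
proof -
  have "\<forall>i\<le>k. mat_poly (G i)"
    using assms unfolding in_DW_def by (metis UNIV_I ext)
  moreover obtain P where "monic_OP W UNIV P" "\<forall>n. \<exists>\<Lambda>. \<forall>x. dop_apply k G (P n) x = \<Lambda> ** P n x"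
    using assms unfolding in_DW_def by auto
  ultimately show ?thesis by metis
qed

lemma dop_apply_odd_if_odd:
  assumes monic: "\<And>m. monic_mat_poly (P m) m"
    and parity: "\<And>m x. P m (- x) = (-1) ^ m *\<^sub>R P m x"
    and eigen: "\<And>m x. dop_apply k G (P m) x = L m ** P m x"
    and Q: "mat_poly_le Q d" and odd: "\<And>x. Q (- x) = - Q x"
  shows "dop_apply k G Q (- x) = - dop_apply k G Q x"
proof -
  obtain A where A: "Q = (\<lambda>x. \<Sum>m\<le>d. A m ** P m x)"
    using mat_poly_le_monic_expansion[OF monic Q] by blast
  \<comment> \<open>only the odd members of the basis occur in the odd part of \<open>Q\<close>\<close>
  define A' where "A' m = ((1 - (-1) ^ m) / 2) *\<^sub>R A m" for m
  have sign: "(-1::real) ^ m * (1 - (-1) ^ m) / 2 = - ((1 - (-1) ^ m) / 2)" for m :: nat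
    by (cases "even m") auto
  have "Q x = (1 / 2) *\<^sub>R (Q x - Q (- x))" for x
    by (simp add: odd flip: scaleR_2)
  also have "\<dots> x = (\<Sum>m\<le>d. A' m ** P m x)" for x
    unfolding A A'_def
    by (simp add: parity matrix_mult.scaleR_left matrix_mult.scaleR_right matrix_mult.diff_left
        scaleR_sum_right algebra_simps diff_divide_distrib flip: sum_subtractf)
  finally have Q_odd_part: "Q = (\<lambda>x. \<Sum>m\<le>d. A' m ** P m x)" ..
  have DQ: "dop_apply k G Q x = (\<Sum>m\<le>d. A' m ** (L m ** P m x))" for x
    unfolding Q_odd_part
    by (simp add: dop_apply_matrix_mult_sum monic_mat_poly_imp_mat_poly[OF monic] eigen)
  show ?thesis
    unfolding DQ parity
    by (simp add: A'_def matrix_mult.scaleR_left matrix_mult.scaleR_right sign sum_negf)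
qed

lemma dop_apply_odd_power_factor:
  assumes monic: "\<And>m. monic_mat_poly (P m) m"
    and parity: "\<And>m x. P m (- x) = (-1) ^ m *\<^sub>R P m x"
    and eigen: "\<And>m x. dop_apply k G (P m) x = L m ** P m x"
    and G_poly: "\<And>i. i \<le> k \<Longrightarrow> mat_poly (G i)"
  shows "\<exists>q. mat_poly q \<and>
    (\<forall>x. dop_apply k G (\<lambda>t. t ^ (2 * j + 1) *\<^sub>R mat 1) x = x *\<^sub>R q (x ^ 2))"
proof (rule mat_poly_odd_factor)
  let ?Q = "\<lambda>t. t ^ (2 * j + 1) *\<^sub>R (mat 1 :: complex^'n^'n)"
  have "mat_poly_le ?Q (2 * j + 1)"
    unfolding mat_poly_le_def
    by (intro exI[of _ "\<lambda>i. if i = 2 * j + 1 then mat 1 else 0"])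
      (simp add: if_distrib cong: if_cong)
  then show "dop_apply k G ?Q (- x) = - dop_apply k G ?Q x" for x
    by (rule dop_apply_odd_if_odd[OF monic parity eigen]) simp
  show "mat_poly (dop_apply k G ?Q)"
    by (intro mat_poly_dop_apply G_poly mat_poly_power_scaleR mat_poly_const)
qed

locale power2_transfer =
  fixes k :: nat and G :: "nat \<Rightarrow> real \<Rightarrow> complex^'n^'n"
    and kE :: nat and GE :: "nat \<Rightarrow> real \<Rightarrow> complex^'n^'n"
    and kT :: nat and GT :: "nat \<Rightarrow> real \<Rightarrow> complex^'n^'n"
  assumes E_eq: "\<forall>F x. smooth_mat F \<and> x \<noteq> 0 \<longrightarrow>
      x *\<^sub>R dop_apply kE GE F x = dop_apply k G (\<lambda>t. t *\<^sub>R F t) x"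
    and Et_eq: "\<forall>F y. smooth_mat F \<and> 0 < y \<longrightarrow>
      dop_apply kE GE F (sqrt y) = dop_apply kT GT (\<lambda>t. F (sqrt t)) y"
begin

lemma dop_apply_transfer:
  assumes F: "mat_poly F"
    and DF: "\<And>x. x \<noteq> 0 \<Longrightarrow> dop_apply k G (\<lambda>t. t *\<^sub>R F (t ^ 2)) x = x *\<^sub>R H (x ^ 2)"
    and "0 < y"
  shows "dop_apply kT GT F y = H y"
proof -
  have smooth: "smooth_mat (\<lambda>x. F (x ^ 2))"
    by (intro mat_poly_smooth mat_poly_compose_power F)
  have "x *\<^sub>R dop_apply kE GE (\<lambda>x. F (x ^ 2)) x = x *\<^sub>R H (x ^ 2)" if "x \<noteq> 0" for x
    using E_eq smooth that DF[OF that] by simp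
  then have EF: "dop_apply kE GE (\<lambda>x. F (x ^ 2)) x = H (x ^ 2)" if "x \<noteq> 0" for x
    using that by simp
  have "dop_apply kT GT F y = dop_apply kT GT (\<lambda>t. F (sqrt t ^ 2)) y"
    by (rule dop_apply_cong_open[of "{0<..}"]) (use \<open>0 < y\<close> in auto)
  also have "\<dots> = dop_apply kE GE (\<lambda>x. F (x ^ 2)) (sqrt y)"
    using Et_eq smooth \<open>0 < y\<close> by simp
  also have "\<dots> = H y"
    using EF[of "sqrt y"] \<open>0 < y\<close> by simp
  finally show ?thesis .
qed

lemma dop_apply_transfer_eigen:
  assumes "mat_poly R" "\<And>x. dop_apply k G P x = \<Lambda> ** P x" "\<And>x. P x = x *\<^sub>R R (x ^ 2)" "0 < y"
  shows "dop_apply kT GT R y = \<Lambda> ** R y"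
proof (rule dop_apply_transfer[OF assms(1) _ assms(4)])
  have "(\<lambda>t. t *\<^sub>R R (t ^ 2)) = P"
    using assms(3) by (simp add: fun_eq_iff)
  then show "dop_apply k G (\<lambda>t. t *\<^sub>R R (t ^ 2)) x = x *\<^sub>R (\<Lambda> ** R (x ^ 2))" for x
    using assms(2)[of x] assms(3)[of x] by (simp add: matrix_mult.scaleR_right)
qed

lemma coeff_mat_poly:
  assumes odd_powers: "\<And>j. \<exists>q. mat_poly q \<and>
      (\<forall>x. dop_apply k G (\<lambda>t. t ^ (2 * j + 1) *\<^sub>R mat 1) x = x *\<^sub>R q (x ^ 2))"
    and "i \<le> kT"
  shows "\<exists>p. mat_poly p \<and> (\<forall>y\<in>{0<..}. GT i y = p y)"
proof (rule dop_apply_coeff_mat_poly[OF _ \<open>i \<le> kT\<close>])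
  fix j
  obtain q where q: "mat_poly q"
    "\<And>x. dop_apply k G (\<lambda>t. t ^ (2 * j + 1) *\<^sub>R mat 1) x = x *\<^sub>R q (x ^ 2)"
    using odd_powers by blast
  have "(\<lambda>t. t *\<^sub>R ((t ^ 2) ^ j *\<^sub>R mat 1)) = (\<lambda>t. t ^ (2 * j + 1) *\<^sub>R (mat 1 :: complex^'n^'n))"
    by (simp add: fun_eq_iff power_mult[symmetric] mult.commute)
  then have "dop_apply kT GT (\<lambda>t. t ^ j *\<^sub>R mat 1) y = q y" if "0 < y" for y
    using q(2)
    by (intro dop_apply_transfer[OF mat_poly_power_scaleR[OF mat_poly_const] _ that]) simp
  with q(1) show "\<exists>q. mat_poly q \<and> (\<forall>y\<in>{0<..}. dop_apply kT GT (\<lambda>t. t ^ j *\<^sub>R mat 1) y = q y)"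
    by auto
qed

end

theorem theorem4p5:
  fixes Z W U :: "real \<Rightarrow> complex^'n^'n"
    and k kE kT :: nat
    and G GE GT :: "nat \<Rightarrow> real \<Rightarrow> complex^'n^'n"
  assumes W_def: "\<forall>x. W x = exp (- (x ^ 2)) *\<^sub>R Z x"
    and W_weight: "weight_matrix W UNIV"
    and W_even: "\<forall>x. W x = W (- x)"
    and U_def: "\<forall>y>0. U y = (sqrt y * exp (- y)) *\<^sub>R Z (sqrt y)"
    and U_weight: "weight_matrix U {0<..}"
    and D_in: "in_DW W UNIV k G"
    and E_def: "\<forall>F x. smooth_mat F \<and> x \<noteq> 0 \<longrightarrow>
                  x *\<^sub>R dop_apply kE GE F x = dop_apply k G (\<lambda>t. t *\<^sub>R F t) x"
    and Et_def: "\<forall>F y. smooth_mat F \<and> 0 < y \<longrightarrow>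
                  dop_apply kE GE F (sqrt y) = dop_apply kT GT (\<lambda>t. F (sqrt t)) y"
  shows "in_DW U {0<..} kT GT"
proof -
  have mom_W: "\<And>j. set_integrable lborel UNIV (\<lambda>x. x ^ j *\<^sub>R W x)"
    and pd: "AE x in lborel. pos_def_mat (W x)"
    and mom_U: "\<And>j. set_integrable lborel {0<..} (\<lambda>x. x ^ j *\<^sub>R U x)"
    using W_weight U_weight by (auto simp: weight_matrix_def)
  have even: "\<And>x. W (- x) = W x" and UW: "\<And>x. 0 < x \<Longrightarrow> U (x ^ 2) = x *\<^sub>R W x"
    using W_even U_def W_def by simp_all
  obtain P L where P: "monic_OP W UNIV P" and eigen: "\<And>n x. dop_apply k G (P n) x = L n ** P n x"
    and G_poly: "\<And>i. i \<le> k \<Longrightarrow> mat_poly (G i)"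
    using in_DW_UNIV_D[OF D_in] by blast
  have monic: "\<And>n. monic_mat_poly (P n) n" and parity: "\<And>n x. P n (- x) = (-1) ^ n *\<^sub>R P n x"
    using P monic_OP_parity[OF pd mom_W even P] by (simp_all add: monic_OP_def)
  obtain R where R_monic: "\<And>n. monic_mat_poly (R n) n"
    and R: "\<And>n x. P (2 * n + 1) x = x *\<^sub>R R n (x ^ 2)"
    using monic_OP_odd_factor[OF pd mom_W even P] by blast
  interpret transfer: power2_transfer k G kE GE kT GT
    by (rule power2_transfer.intro[OF E_def Et_def])
  have "monic_OP U {0<..} R"
    by (rule monic_OP_half_line[OF UW even mom_W mom_U P R_monic R])
  moreover have "dop_apply kT GT (R n) y = L (2 * n + 1) ** R n y" if "0 < y" for n y
    using monic_mat_poly_imp_mat_poly[OF R_monic] eigen R that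
    by (rule transfer.dop_apply_transfer_eigen)
  moreover have "\<exists>p. mat_poly p \<and> (\<forall>y\<in>{0<..}. GT i y = p y)" if "i \<le> kT" for i
    using dop_apply_odd_power_factor[OF monic parity eigen G_poly] that
    by (rule transfer.coeff_mat_poly)
  ultimately show ?thesis
    unfolding in_DW_def by blast
qed

end
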